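(* Let $\mathcal{X}=\langle x_1,\dots,x_n\rangle$ be an input sequence of $n$ colored items in which exactly $\sigma$ distinct colors appear, and let $o_1\ge o_2$ denote the number of occurrences in $\mathcal{X}$ of the most frequent and of the second most frequent color, respectively. Let $k\ge 1$ be a buffer size satisfying at least one of $$2\left\lceil \frac{k}{\sigma}\right\rceil > o_1 \qquad\text{or}\qquad \left\lceil \frac{k}{\sigma}\right\rceil > o_2 .$$ Process $\mathcal{X}$ with a buffer of size $k$ using the Most-Frequent-Color strategy (described in the context), and assume that every color selection during the run is made at a moment when the buffer contains exactly $k$ items. Then the output sequence is optimal: the items of each color appear consecutively in the output, i.e. the output consists of exactly $\sigma$ maximal monochromatic blocks (equivalently, it has exactly $\sigma-1$ color changes, the minimum possible).
   Context: Reordering buffer model (uniform cost): items of the input sequence arrive one at a time, in order, and are inserted into a buffer that can hold at most $k$ items. At any time there is a current output color. The strategy is lazy: whenever the buffer contains items of the current output color, these items are removed from the buffer and appended to the output sequence, and vacancies are refilled from the input (newly arriving items of the current output color are likewise output immediately). When the buffer contains no item of the current output color, a new output color is selected among the colors present in the buffer, and all buffer items of that color are appended to the output. The Most-Frequent-Color strategy always selects, as the new output color, a color having the largest number of items currently in the buffer (ties broken arbitrarily). The process continues until the input and the buffer are both empty. The cost of the output is the number of pairs of consecutive output items with different colors; any output must contain at least $\sigma$ maximal monochromatic blocks. *)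

theory Defs
  imports Complex_Main "HOL-Library.Multiset"
begin

text \<open>Lazy reordering buffer run with the Most-Frequent-Color strategy (uniform cost).
  mfc_run k inp buf cur out full: starting from the configuration with remaining input inp,
  buffer contents buf (multiset of colors), current output color cur, the process
  (with some tie-breaking) produces the remaining output out; full is True iff every
  color selection in this run is made while the buffer holds exactly k items.\<close>

inductive mfc_run :: "nat \<Rightarrow> 'c list \<Rightarrow> 'c multiset \<Rightarrow> 'c option \<Rightarrow> 'c list \<Rightarrow> bool \<Rightarrow> bool"
  for k :: nat where
  finish: "mfc_run k [] {#} cur [] True"
| flush: "\<lbrakk> cur = Some c; count buf c > 0;
            mfc_run k inp (buf - replicate_mset (count buf c) c) cur out f \<rbrakk>
          \<Longrightarrow> mfc_run k inp buf cur (replicate (count buf c) c @ out) f"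
| read: "\<lbrakk> \<forall>c. cur = Some c \<longrightarrow> count buf c = 0; size buf < k;
           mfc_run k xs (if cur = Some x then buf else add_mset x buf) cur out f \<rbrakk>
         \<Longrightarrow> mfc_run k (x # xs) buf cur (if cur = Some x then x # out else out) f"
| select: "\<lbrakk> \<forall>c'. cur = Some c' \<longrightarrow> count buf c' = 0; inp = [] \<or> size buf \<ge> k;
             count buf c > 0; \<forall>d. count buf d \<le> count buf c;
             mfc_run k inp buf (Some c) out f \<rbrakk>
           \<Longrightarrow> mfc_run k inp buf cur out (f \<and> size buf = k)"

text \<open>Occurrence counts of the colors of xs, sorted non-increasingly; occ_rank xs 0 = o_1,
  occ_rank xs 1 = o_2 (0 if there is no such color).\<close>

definition color_counts :: "'c list \<Rightarrow> nat list" where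
  "color_counts xs = rev (sort (map (count_list xs) (remdups xs)))"

definition occ_rank :: "'c list \<Rightarrow> nat \<Rightarrow> nat" where
  "occ_rank xs i = (if i < length (color_counts xs) then color_counts xs ! i else 0)"

end

theory Submission
  imports Defs
begin

(* Every colour selection happens with a full buffer of k items drawn from at most \<sigma> colours,
   so the selected colour occurs at least \<lceil>k/\<sigma>\<rceil> times in the buffer and the output is a
   concatenation of monochromatic runs of length at least m = \<lceil>k/\<sigma>\<rceil>.  A colour heading r of
   these runs therefore occurs at least r m times in the input.  If 2m > o\<^sub>1, no colour can head
   two runs; if m > o\<^sub>2, at most one colour can head runs at all.  Either way no colour is
   split between two maximal blocks of the output. *)

definition run_length_decode :: "('c \<times> nat) list \<Rightarrow> 'c list" where
  "run_length_decode bs = concat (map (\<lambda>(c, n). replicate n c) bs)"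

lemma run_length_decode_simps [simp]:
  "run_length_decode [] = []"
  "run_length_decode ((c, n) # bs) = replicate n c @ run_length_decode bs"
  by (simp_all add: run_length_decode_def)

lemma remdups_adj_Cons_cong:
  "remdups_adj xs = remdups_adj ys \<Longrightarrow> remdups_adj (x # xs) = remdups_adj (x # ys)"
  by (simp add: remdups_adj_Cons)

lemma remdups_adj_replicate_append:
  "remdups_adj (replicate (Suc n) x @ ys) = remdups_adj (x # ys)"
  by (induction n) auto

lemma remdups_adj_run_length_decode:
  assumes "\<forall>(c, n)\<in>set bs. 0 < n"
  shows "remdups_adj (run_length_decode bs) = remdups_adj (map fst bs)"
  using assms
proof (induction bs)
  case (Cons b bs)
  obtain c n where b: "b = (c, Suc n)"
    using Cons.prems by (cases b) (auto simp: gr0_conv_Suc)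
  have "remdups_adj (run_length_decode (b # bs)) = remdups_adj (c # run_length_decode bs)"
    using remdups_adj_replicate_append[of n c "run_length_decode bs"] by (simp add: b)
  also have "\<dots> = remdups_adj (c # map fst bs)"
    using Cons by (intro remdups_adj_Cons_cong) simp
  finally show ?case by (simp add: b)
qed simp

lemma count_list_run_length_decode_ge:
  assumes "\<forall>(c, n)\<in>set bs. m \<le> n"
  shows "m * count_list (map fst bs) c \<le> count_list (run_length_decode bs) c"
  using assms by (induction bs) (auto simp: count_list_eq_length_filter)

lemma le_nth_0_if_sorted_desc:
  fixes a :: "'a :: linorder"
  assumes "sorted_wrt (\<ge>) ds" "a \<in> set ds"
  shows "a \<le> ds ! 0"
  using assms by (cases ds) auto

lemma min_le_nth_1_if_sorted_desc:
  fixes a b :: "'a :: linorder"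
  assumes "sorted_wrt (\<ge>) ds" "{#a, b#} \<subseteq># mset ds"
  shows "min a b \<le> ds ! 1"
proof (cases ds)
  case (Cons z ds')
  have "a \<in> set ds' \<or> b \<in> set ds'"
  proof (cases "a = z")
    case True
    then have "{#b#} \<subseteq># mset ds'"
      using assms(2) Cons by (simp add: add_mset_commute)
    then show ?thesis by simp
  next
    case False
    have "a \<in># mset ds"
      using assms(2) by (rule mset_subset_eqD) simp
    with False Cons show ?thesis
      by simp
  qed
  moreover have "sorted_wrt (\<ge>) ds'"
    using assms(1) Cons by simp
  ultimately show ?thesis
    using le_nth_0_if_sorted_desc[of ds'] Cons by (auto simp: min_le_iff_disj)
qed (use assms(2) in simp)

lemma sorted_desc_color_counts: "sorted_wrt (\<ge>) (color_counts xs)"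
  by (simp add: color_counts_def sorted_wrt_rev flip: sorted_map_same)

lemma mset_color_counts:
  "mset (color_counts xs) = image_mset (count_list xs) (mset_set (set xs))"
  using mset_set_set[of "remdups xs"] by (simp add: color_counts_def)

lemma count_list_le_occ_rank_0: "count_list xs c \<le> occ_rank xs 0"
proof (cases "c \<in> set xs")
  case True
  then have "count_list xs c \<in> set (color_counts xs)"
    by (simp add: color_counts_def)
  then show ?thesis
    using le_nth_0_if_sorted_desc[OF sorted_desc_color_counts]
    by (auto simp: occ_rank_def)
qed (simp add: count_list_0_iff)

lemma min_count_list_le_occ_rank_1:
  assumes "c \<noteq> d"
  shows "min (count_list xs c) (count_list xs d) \<le> occ_rank xs 1"
proof (cases "c \<in> set xs \<and> d \<in> set xs")
  case True
  have "{#c, d#} = mset_set {c, d}"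
    using assms by simp
  also have "\<dots> \<subseteq># mset_set (set xs)"
    using True by simp
  finally have sub: "{#count_list xs c, count_list xs d#} \<subseteq># mset (color_counts xs)"
    unfolding mset_color_counts using image_mset_subseteq_mono by fastforce
  then have "1 < length (color_counts xs)"
    using size_mset_mono[OF sub] by simp
  then show ?thesis
    using min_le_nth_1_if_sorted_desc[OF sorted_desc_color_counts sub] by (simp add: occ_rank_def)
qed (auto simp: count_list_0_iff)

lemma distinct_if_occ_rank_0_less:
  assumes "occ_rank xs 0 < 2 * m" "\<And>c. m * count_list ys c \<le> count_list xs c"
  shows "distinct ys"
proof (rule ccontr)
  assume "\<not> distinct ys"
  then obtain c where "2 \<le> count_list ys c"
    by (force dest: not_distinct_decomp)
  then have "2 * m \<le> count_list xs c"
    using assms(2)[of c] by (metis mult.commute mult_le_mono2 order_trans)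
  then show False
    using assms(1) count_list_le_occ_rank_0[of xs c] by linarith
qed

lemma distinct_remdups_adj_if_occ_rank_1_less:
  assumes "occ_rank xs 1 < m" "\<And>c. m * count_list ys c \<le> count_list xs c"
  shows "distinct (remdups_adj ys)"
proof (cases ys)
  case (Cons y ys')
  have heavy: "m \<le> count_list xs c" if "c \<in> set ys" for c
  proof -
    have "1 \<le> count_list ys c"
      using that count_list_0_iff[of ys c] by (auto simp: Suc_le_eq)
    then show ?thesis
      using assms(2)[of c] by (metis mult.right_neutral mult_le_mono2 order_trans)
  qed
  have "c = y" if "c \<in> set ys" for c
  proof (rule ccontr)
    assume "c \<noteq> y"
    then show False
      using min_count_list_le_occ_rank_1[of c y xs] heavy[OF that] heavy[of y] Cons assms(1)
      by auto
  qed
  then have "ys = replicate (length ys) y"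
    by (simp add: replicate_length_same)
  then show ?thesis
    by (metis distinct_singleton remdups_adj_replicate distinct.simps(1))
qed simp

lemma mset_mfc_run:
  assumes "mfc_run k inp buf cur out f"
  shows "mset out = mset inp + buf"
  using assms
proof induction
  case (flush cur c buf inp out f)
  have "replicate_mset (count buf c) c \<subseteq># buf"
    using count_le_replicate_mset_subset_eq[of "count buf c" buf c] by simp
  then show ?case
    using flush.IH by (simp add: multiset_eq_iff subseteq_mset_def)
next
  case (read cur buf xs x out f)
  then show ?case by (cases "cur = Some x") simp_all
qed simp_all

lemma size_le_card_mult_max_count:
  assumes "set_mset M \<subseteq> S" "finite S" "\<forall>d. count M d \<le> count M c"
  shows "size M \<le> card S * count M c"
proof -
  have "size M = (\<Sum>d\<in>set_mset M. count M d)"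
    by (rule size_multiset_overloaded_eq)
  also have "\<dots> \<le> (\<Sum>d\<in>set_mset M. count M c)"
    using assms(3) by (intro sum_mono) auto
  also have "\<dots> \<le> card S * count M c"
    using assms(1,2) by (simp add: card_mono)
  finally show ?thesis .
qed

(* The leading replicate j c is the remainder of the current run; bounding j by the buffer's
   stock of c makes a run opened at a selection as long as that colour's count in the full buffer. *)
lemma mfc_run_full_output_runs:
  assumes "mfc_run k inp buf cur out f" "f" "set_mset buf \<union> set inp \<subseteq> S" "finite S"
  shows "\<exists>j bs. out = (case cur of None \<Rightarrow> [] | Some c \<Rightarrow> replicate j c) @ run_length_decode bs
           \<and> (\<forall>c. cur = Some c \<longrightarrow> count buf c \<le> j)
           \<and> (\<forall>(c, n)\<in>set bs. 0 < n \<and> k \<le> card S * n)"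
  using assms
proof induction
  case (finish cur)
  show ?case
    by (intro exI[of _ 0] exI[of _ "[]"]) (simp split: option.split)
next
  case (flush cur c buf inp out f)
  have "set_mset (buf - replicate_mset (count buf c) c) \<subseteq> set_mset buf"
    by (meson in_diffD subsetI)
  with flush obtain j bs where
    "out = replicate j c @ run_length_decode bs" "\<forall>(c, n)\<in>set bs. 0 < n \<and> k \<le> card S * n"
    by auto
  with flush.hyps(1) show ?case
    by (intro exI[of _ "count buf c + j"] exI[of _ bs]) (simp add: replicate_add)
next
  case (read cur buf xs x out f)
  then obtain j bs where
    out: "out = (case cur of None \<Rightarrow> [] | Some c \<Rightarrow> replicate j c) @ run_length_decode bs"
    and runs: "\<forall>(c, n)\<in>set bs. 0 < n \<and> k \<le> card S * n"
    by (auto split: if_splits)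
  show ?case
  proof (cases "cur = Some x")
    case True
    with out runs read.hyps(1) show ?thesis
      by (intro exI[of _ "Suc j"] exI[of _ bs]) simp
  next
    case False
    with out runs read.hyps(1) show ?thesis
      by (intro exI[of _ j] exI[of _ bs]) auto
  qed
next
  case (select cur buf inp c out f)
  then obtain j bs where
    out: "out = replicate j c @ run_length_decode bs" "count buf c \<le> j"
    and runs: "\<forall>(c, n)\<in>set bs. 0 < n \<and> k \<le> card S * n"
    by auto
  have "k \<le> card S * count buf c"
    using select size_le_card_mult_max_count[of buf S c] by auto
  also have "\<dots> \<le> card S * j"
    using out(2) by simp
  finally have "k \<le> card S * j" .
  moreover have "0 < j"
    using out(2) select.hyps(3) by linarith
  ultimately show ?case
    using out runs select.hyps(1)
    by (intro exI[of _ 0] exI[of _ "(c, j) # bs"]) (auto split: option.split)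
qed

lemma ceiling_divide_le_if_le_mult:
  assumes "0 < n" "k \<le> n * l"
  shows "\<lceil>real k / real n\<rceil> \<le> int l"
proof -
  have "real k \<le> real n * real l"
    using assms(2) by (metis of_nat_le_iff of_nat_mult)
  then show ?thesis
    using assms(1) by (simp add: ceiling_le_iff divide_le_eq mult.commute)
qed

theorem lemma1:
  fixes xs :: "'c list" and k :: nat
  assumes "k \<ge> 1"
    and "2 * \<lceil>real k / real (card (set xs))\<rceil> > int (occ_rank xs 0)
         \<or> \<lceil>real k / real (card (set xs))\<rceil> > int (occ_rank xs 1)"
    and "mfc_run k xs {#} None out True"
  shows "length (remdups_adj out) = card (set xs)"
proof -
  define m where "m = nat \<lceil>real k / real (card (set xs))\<rceil>"
  have "0 \<le> \<lceil>real k / real (card (set xs))\<rceil>"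
    by (simp add: order.strict_trans2[of "-1" 0])
  then have M: "\<lceil>real k / real (card (set xs))\<rceil> = int m"
    by (simp add: m_def)
  have "0 < card (set xs)"
    using assms(2) by (cases "xs = []") (auto simp: card_gt_0_iff)
  obtain bs where out: "out = run_length_decode bs"
    and runs: "\<forall>(c, n)\<in>set bs. 0 < n \<and> k \<le> card (set xs) * n"
    using mfc_run_full_output_runs[OF assms(3) TrueI, of "set xs"] by auto
  have "\<forall>(c, n)\<in>set bs. m \<le> n"
    using runs ceiling_divide_le_if_le_mult[OF \<open>0 < card (set xs)\<close>] M by fastforce
  moreover have "mset out = mset xs"
    using mset_mfc_run[OF assms(3)] by simp
  ultimately have heavy: "m * count_list (map fst bs) c \<le> count_list xs c" for c
    using count_list_run_length_decode_ge[of bs m c] out by (metis count_mset)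
  have "occ_rank xs 0 < 2 * m \<or> occ_rank xs 1 < m"
    using assms(2) unfolding M by linarith
  then have "distinct (remdups_adj (map fst bs))"
    using distinct_if_occ_rank_0_less[OF _ heavy] distinct_remdups_adj_if_occ_rank_1_less[OF _ heavy]
    by (auto simp: remdups_adj_distinct)
  moreover have "remdups_adj out = remdups_adj (map fst bs)"
    using runs out by (auto intro: remdups_adj_run_length_decode)
  ultimately show ?thesis
    using \<open>mset out = mset xs\<close> by (metis distinct_card remdups_adj_set mset_eq_setD)
qed

end
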